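(* Let $\mu,\nu$ be Borel probability measures on $\mathbb{R}^d$ such that: (a) there is a bounded connected open Lipschitz domain $\Omega\subset B(0,1)$ with $\mu(dx)=\rho_\mu(x)\mathbf 1_\Omega(x)dx$ and $0<\underline\lambda_\mu\le\rho_\mu\le\overline\lambda_\mu<\infty$ a.e. on $\Omega$; (b) $\nu\ll\mathrm{Leb}$, $\operatorname{spt}\nu\subseteq B(0,1)$, $d\nu/dy\le\overline\lambda_\nu<\infty$ on $\operatorname{spt}\nu$. Let $T$ be the Monge map from $\mu$ to $\nu$, $\pi_\varepsilon$ the QOT optimizer, and let $C_{\mathrm{val}}$ be a constant with $C_{\mathrm{val}}^{-1}\varepsilon^{2/(2+d)}\le\Delta_\varepsilon\le C_{\mathrm{val}}\varepsilon^{2/(2+d)}$ for all $\varepsilon\in(0,1]$. Let $m_\varepsilon\coloneqq\int\|y-T(x)\|^2\pi_\varepsilon(dx,dy)$. Then for all $\varepsilon\in(0,1]$, $$m_\varepsilon\ge c_{\mathrm{mse}}\varepsilon^{\frac2{d+2}},\qquad c_{\mathrm{mse}}\coloneqq\frac12\left(\frac{1}{96\overline\lambda_\nu\omega_dC_{\mathrm{val}}}\right)^{2/d}.$$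
   Context: Cost $c(x,y)=\frac12\|x-y\|^2$, $P=\mu\otimes\nu$, $\mathrm{OT}(\mu,\nu)=\inf_{\pi\in\Pi(\mu,\nu)}\int c\,d\pi$; the Monge map $T=\nabla\varphi$ ($\varphi$ convex) is the Brenier optimal map with $T_\#\mu=\nu$. For $\varepsilon>0$, $\mathrm{QOT}_\varepsilon(\mu,\nu)=\inf_{\pi\in\Pi(\mu,\nu),\pi\ll P}\{\int c\,d\pi+\frac\varepsilon2\|\frac{d\pi}{dP}\|^2_{L^2(P)}\}$, $\pi_\varepsilon$ its unique optimizer, $\Delta_\varepsilon=\mathrm{QOT}_\varepsilon-\mathrm{OT}$. $\omega_d=\pi^{d/2}/\Gamma(\frac d2+1)$. *)

theory Defs
  imports "HOL-Probability.Probability"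
begin

definition quad_cost :: "'a::euclidean_space \<Rightarrow> 'a \<Rightarrow> real" where
  "quad_cost x y = (norm (x - y))^2 / 2"

definition coupling :: "'a measure \<Rightarrow> 'b measure \<Rightarrow> ('a \<times> 'b) measure \<Rightarrow> bool" where
  "coupling \<mu> \<nu> \<pi> \<longleftrightarrow> sets \<pi> = sets (\<mu> \<Otimes>\<^sub>M \<nu>) \<and>
     distr \<pi> \<mu> fst = \<mu> \<and> distr \<pi> \<nu> snd = \<nu>"

definition OT :: "'a::euclidean_space measure \<Rightarrow> 'a measure \<Rightarrow> ennreal" where
  "OT \<mu> \<nu> = (INF \<pi>\<in>{\<pi>. coupling \<mu> \<nu> \<pi>}.
       \<integral>\<^sup>+ z. ennreal (quad_cost (fst z) (snd z)) \<partial>\<pi>)"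

definition QOT_obj :: "real \<Rightarrow> 'a::euclidean_space measure \<Rightarrow> 'a measure \<Rightarrow> ('a \<times> 'a) measure \<Rightarrow> ennreal" where
  "QOT_obj \<epsilon> \<mu> \<nu> \<pi> =
     (\<integral>\<^sup>+ z. ennreal (quad_cost (fst z) (snd z)) \<partial>\<pi>)
     + ennreal (\<epsilon> / 2) * (\<integral>\<^sup>+ z. (RN_deriv (\<mu> \<Otimes>\<^sub>M \<nu>) \<pi> z)^2 \<partial>(\<mu> \<Otimes>\<^sub>M \<nu>))"

definition QOT_admissible :: "'a measure \<Rightarrow> 'a measure \<Rightarrow> ('a \<times> 'a) measure \<Rightarrow> bool" where
  "QOT_admissible \<mu> \<nu> \<pi> \<longleftrightarrow> coupling \<mu> \<nu> \<pi> \<and> absolutely_continuous (\<mu> \<Otimes>\<^sub>M \<nu>) \<pi>"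

definition QOT :: "real \<Rightarrow> 'a::euclidean_space measure \<Rightarrow> 'a measure \<Rightarrow> ennreal" where
  "QOT \<epsilon> \<mu> \<nu> = (INF \<pi>\<in>{\<pi>. QOT_admissible \<mu> \<nu> \<pi>}. QOT_obj \<epsilon> \<mu> \<nu> \<pi>)"

definition QOT_optimizer :: "real \<Rightarrow> 'a::euclidean_space measure \<Rightarrow> 'a measure \<Rightarrow> ('a \<times> 'a) measure \<Rightarrow> bool" where
  "QOT_optimizer \<epsilon> \<mu> \<nu> \<pi> \<longleftrightarrow> QOT_admissible \<mu> \<nu> \<pi> \<and> QOT_obj \<epsilon> \<mu> \<nu> \<pi> = QOT \<epsilon> \<mu> \<nu>"

text \<open>Delta_eps = QOT_eps - OT (both finite under the standing assumptions).\<close>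
definition QOT_gap :: "real \<Rightarrow> 'a::euclidean_space measure \<Rightarrow> 'a measure \<Rightarrow> real" where
  "QOT_gap \<epsilon> \<mu> \<nu> = enn2real (QOT \<epsilon> \<mu> \<nu>) - enn2real (OT \<mu> \<nu>)"

definition monge_map :: "'a::euclidean_space measure \<Rightarrow> 'a measure \<Rightarrow> ('a \<Rightarrow> 'a) \<Rightarrow> bool" where
  "monge_map \<mu> \<nu> T \<longleftrightarrow> T \<in> borel_measurable \<mu> \<and> distr \<mu> borel T = \<nu> \<and>
     (\<exists>\<phi>::'a \<Rightarrow> real. convex_on UNIV \<phi> \<and>
        (AE x in \<mu>. (\<phi> has_derivative (\<lambda>h. T x \<bullet> h)) (at x)))"

text \<open>Bounded open Lipschitz domain: boundary locally the graph of a Lipschitz function.\<close>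
definition lipschitz_domain :: "'a::euclidean_space set \<Rightarrow> bool" where
  "lipschitz_domain \<Omega> \<longleftrightarrow> open \<Omega> \<and> bounded \<Omega> \<and>
     (\<forall>p\<in>frontier \<Omega>. \<exists>r>0. \<exists>u L. \<exists>g::'a \<Rightarrow> real. norm u = 1 \<and>
        (\<forall>y z. \<bar>g y - g z\<bar> \<le> L * norm (y - z)) \<and>
        (\<forall>x\<in>ball p r. x \<in> \<Omega> \<longleftrightarrow> g (x - (x \<bullet> u) *\<^sub>R u) < x \<bullet> u))"

definition spt :: "'a::metric_space measure \<Rightarrow> 'a set" where
  "spt M = {x. \<forall>r>0. emeasure M (ball x r) > 0}"

definition omega :: "nat \<Rightarrow> real" where
  "omega d = pi powr (real d / 2) / Gamma (real d / 2 + 1)"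

end

theory Submission
  imports Defs
begin

text \<open>
  Let \<open>f\<close> be the density of \<open>\<pi>\<^sub>\<epsilon>\<close> with respect to \<open>P = \<mu> \<otimes> \<nu>\<close>. The transport cost of
  \<open>\<pi>\<^sub>\<epsilon>\<close> is at least \<open>OT\<close>, so \<open>\<epsilon>/2 \<parallel>f\<parallel>\<^sup>2 \<le> \<Delta>\<^sub>\<epsilon> \<le> Cval \<epsilon>\<^bsup>2/(2+d)\<^esup>\<close>. By Fubini and the density bound
  on \<open>\<nu>\<close>, the tube \<open>A = {\<parallel>y - T x\<parallel> < r}\<close> has \<open>P(A) \<le> hi\<nu> \<omega>\<^sub>d r\<^sup>d\<close>, and Cauchy-Schwarz gives
  \<open>\<pi>\<^sub>\<epsilon>(A) \<le> \<parallel>f\<parallel> P(A)\<^bsup>1/2\<^esup>\<close>. For \<open>r\<^sup>2 = 2 c\<^sub>m\<^sub>s\<^sub>e \<epsilon>\<^bsup>2/(d+2)\<^esup>\<close> this is \<open>1/\<surd>48 < 1/2\<close>, so at least half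
  of the mass of \<open>\<pi>\<^sub>\<epsilon>\<close> lies where \<open>\<parallel>y - T x\<parallel> \<ge> r\<close>, whence \<open>m\<^sub>\<epsilon> \<ge> r\<^sup>2/2\<close>.
  Only the measurability of \<open>T\<close> enters.
\<close>

lemma null_ball_subset_Compl_spt:
  fixes M :: "'a::metric_space measure"
  assumes "sets M = sets borel" and "emeasure M (ball x r) = 0"
  shows "ball x r \<subseteq> - spt M"
proof
  fix y assume y: "y \<in> ball x r"
  then obtain e where e: "e > 0" "ball y e \<subseteq> ball x r"
    using open_ball openE by blast
  have "emeasure M (ball y e) \<le> emeasure M (ball x r)"
    using e(2) assms(1) by (intro emeasure_mono) (auto intro: borel_open)
  with e(1) assms(2) show "y \<in> - spt M"
    unfolding spt_def by auto
qed

lemma Compl_spt_eq_Union_null_balls: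
  fixes M :: "'a::metric_space measure"
  assumes "sets M = sets borel"
  shows "- spt M = \<Union>{ball x r | x r. emeasure M (ball x r) = 0}"
proof
  show "- spt M \<subseteq> \<Union>{ball x r | x r. emeasure M (ball x r) = 0}"
    by (force simp: spt_def not_less)
  show "\<Union>{ball x r | x r. emeasure M (ball x r) = 0} \<subseteq> - spt M"
    using null_ball_subset_Compl_spt[OF assms] by blast
qed

lemma closed_spt:
  fixes M :: "'a::metric_space measure"
  assumes "sets M = sets borel"
  shows "closed (spt M)"
  unfolding closed_def Compl_spt_eq_Union_null_balls[OF assms] by blast

lemma emeasure_Compl_spt:
  fixes M :: "'a::{metric_space, second_countable_topology} measure"
  assumes M: "sets M = sets borel"
  shows "emeasure M (- spt M) = 0"
proof -
  define F where "F = {ball x r | x r. emeasure M (ball x r) = 0}"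
  obtain F' where F': "F' \<subseteq> F" "countable F'" "\<Union>F' = \<Union>F"
    using Lindelof[of F] unfolding F_def by auto
  have "(\<Union>B\<in>F'. B) \<in> null_sets M"
    using F' by (intro null_sets_UN') (auto simp: F_def null_sets_def M borel_open)
  then show ?thesis
    using F' Compl_spt_eq_Union_null_balls[OF M] by (simp add: F_def null_setsD1)
qed

lemma emeasure_density_le_bound_on_spt:
  fixes M :: "'a::{metric_space, second_countable_topology} measure"
  assumes M: "sets M = sets borel" and g: "g \<in> borel_measurable M"
    and bound: "AE y in M. y \<in> spt (density M g) \<longrightarrow> g y \<le> ennreal c"
    and S: "S \<in> sets M"
  shows "emeasure (density M g) S \<le> ennreal c * emeasure M S"
proof -
  let ?N = "density M g"
  have N: "sets ?N = sets borel" using M by simp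
  have spt_sets: "spt ?N \<in> sets M"
    using closed_spt[OF N] M by (simp add: borel_closed)
  have "emeasure ?N S \<le> emeasure ?N (S \<inter> spt ?N) + emeasure ?N (- spt ?N)"
    using S spt_sets M by (intro emeasure_subadditive[THEN order_trans[rotated]] emeasure_mono) auto
  also have "emeasure ?N (- spt ?N) = 0"
    using emeasure_Compl_spt[OF N] .
  also have "emeasure ?N (S \<inter> spt ?N) = (\<integral>\<^sup>+ y. g y * indicator (S \<inter> spt ?N) y \<partial>M)"
    using S spt_sets g by (intro emeasure_density) auto
  also have "\<dots> \<le> (\<integral>\<^sup>+ y. ennreal c * indicator S y \<partial>M)"
    using bound by (intro nn_integral_mono_AE) (auto simp: indicator_def elim!: eventually_mono)
  also have "\<dots> = ennreal c * emeasure M S"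
    using S by (rule nn_integral_cmult_indicator)
  finally show ?thesis by simp
qed

lemma prob_space_coupling:
  assumes "prob_space \<mu>" and "coupling \<mu> \<nu> \<pi>"
  shows "prob_space \<pi>"
proof (rule prob_spaceI)
  have \<pi>: "sets \<pi> = sets (\<mu> \<Otimes>\<^sub>M \<nu>)" and \<mu>: "distr \<pi> \<mu> fst = \<mu>"
    using assms(2) unfolding coupling_def by auto
  have fst: "fst \<in> \<pi> \<rightarrow>\<^sub>M \<mu>"
    using measurable_cong_sets[OF \<pi> refl, of \<mu>] measurable_fst[of \<mu> \<nu>] by simp
  have "emeasure \<pi> (space \<pi>) = emeasure (distr \<pi> \<mu> fst) (space \<mu>)"
    using fst measurable_space[OF fst] by (subst emeasure_distr) (auto intro!: arg_cong[where f = "emeasure \<pi>"])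
  also have "\<dots> = 1"
    using \<mu> prob_space.emeasure_space_1[OF assms(1)] by simp
  finally show "emeasure \<pi> (space \<pi>) = 1" .
qed

lemma ennreal_Young:
  fixes f :: ennreal and t :: real
  assumes "0 < t"
  shows "f \<le> ennreal (t / 2) * f\<^sup>2 + ennreal (1 / (2 * t))"
proof (cases f)
  case (real u)
  have "0 \<le> (t * u - 1)\<^sup>2 / (2 * t)" using assms by simp
  also have "\<dots> = t / 2 * u\<^sup>2 + 1 / (2 * t) - u"
    using assms by (simp add: field_simps power2_eq_square)
  finally have "ennreal u \<le> ennreal (t / 2 * u\<^sup>2 + 1 / (2 * t))"
    by (intro ennreal_leI) simp
  then show ?thesis
    using assms real by (simp add: ennreal_mult[symmetric] ennreal_power)
qed (use assms in \<open>simp add: ennreal_mult_top\<close>)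

lemma emeasure_density_le_sqrt:
  assumes f: "f \<in> borel_measurable M" and A: "A \<in> sets M"
    and L2: "(\<integral>\<^sup>+ z. (f z)\<^sup>2 \<partial>M) \<le> ennreal a" and MA: "emeasure M A \<le> ennreal b"
    and "0 < a" "0 < b"
  shows "emeasure (density M f) A \<le> ennreal (sqrt (a * b))"
proof -
  define t where "t = sqrt (b / a)"
  have t: "0 < t" using assms by (simp add: t_def)
  have "emeasure (density M f) A = (\<integral>\<^sup>+ z. f z * indicator A z \<partial>M)"
    using f A by (rule emeasure_density)
  also have "\<dots> \<le> (\<integral>\<^sup>+ z. ennreal (t / 2) * (f z)\<^sup>2 + ennreal (1 / (2 * t)) * indicator A z \<partial>M)"
    using ennreal_Young[OF t] by (intro nn_integral_mono) (simp split: split_indicator)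
  also have "\<dots> = ennreal (t / 2) * (\<integral>\<^sup>+ z. (f z)\<^sup>2 \<partial>M) + ennreal (1 / (2 * t)) * emeasure M A"
    using f A by (simp add: nn_integral_add nn_integral_cmult)
  also have "\<dots> \<le> ennreal (t / 2) * ennreal a + ennreal (1 / (2 * t)) * ennreal b"
    using L2 MA by (intro add_mono mult_left_mono) auto
  also have "\<dots> = ennreal (t / 2 * a + b / (2 * t))"
    using t assms by (simp add: ennreal_mult[symmetric])
  also have "t / 2 * a + b / (2 * t) = sqrt (a * b)"
    using assms by (simp add: t_def real_sqrt_divide real_sqrt_mult field_simps)
  finally show ?thesis .
qed

lemma nn_integral_RN_deriv_sq_le_QOT_gap:
  fixes \<mu> \<nu> :: "'a::euclidean_space measure"
  assumes opt: "QOT_optimizer \<epsilon> \<mu> \<nu> \<pi>" and \<epsilon>: "0 < \<epsilon>" and gap: "0 < QOT_gap \<epsilon> \<mu> \<nu>"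
  shows "(\<integral>\<^sup>+ z. (RN_deriv (\<mu> \<Otimes>\<^sub>M \<nu>) \<pi> z)\<^sup>2 \<partial>(\<mu> \<Otimes>\<^sub>M \<nu>)) \<le> ennreal (2 / \<epsilon> * QOT_gap \<epsilon> \<mu> \<nu>)"
    (is "?R \<le> _")
proof -
  define C where "C = (\<integral>\<^sup>+ z. ennreal (quad_cost (fst z) (snd z)) \<partial>\<pi>)"
  have QOT: "QOT \<epsilon> \<mu> \<nu> = C + ennreal (\<epsilon> / 2) * ?R"
    using opt unfolding QOT_optimizer_def QOT_obj_def C_def by simp
  have OT: "OT \<mu> \<nu> \<le> C"
    using opt unfolding OT_def C_def QOT_optimizer_def QOT_admissible_def by (auto intro: INF_lower)
  \<comment> \<open>If QOT were infinite, its enn2real would be the junk value 0 and the gap nonpositive.\<close>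
  have "QOT \<epsilon> \<mu> \<nu> \<noteq> \<top>"
  proof
    assume "QOT \<epsilon> \<mu> \<nu> = \<top>"
    then have "QOT_gap \<epsilon> \<mu> \<nu> = - enn2real (OT \<mu> \<nu>)"
      by (simp add: QOT_gap_def)
    with gap show False
      using enn2real_nonneg[of "OT \<mu> \<nu>"] by linarith
  qed
  then have C: "C < \<top>" and R: "?R < \<top>"
    using QOT OT \<epsilon> by (auto simp: top_unique less_top ennreal_mult_eq_top_iff)
  have "enn2real (QOT \<epsilon> \<mu> \<nu>) = enn2real C + \<epsilon> / 2 * enn2real ?R"
    using C R \<epsilon> unfolding QOT by (simp add: enn2real_plus enn2real_mult ennreal_mult_less_top)
  moreover have "enn2real (OT \<mu> \<nu>) \<le> enn2real C"
    using OT C by (rule enn2real_mono)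
  ultimately have "\<epsilon> / 2 * enn2real ?R \<le> QOT_gap \<epsilon> \<mu> \<nu>"
    by (simp add: QOT_gap_def)
  then have "enn2real ?R \<le> 2 / \<epsilon> * QOT_gap \<epsilon> \<mu> \<nu>"
    using \<epsilon> by (simp add: field_simps)
  then show ?thesis
    using R by (metis ennreal_enn2real ennreal_leI less_top)
qed

lemma sets_near_graph:
  fixes T :: "'a \<Rightarrow> 'b::{metric_space, second_countable_topology}"
  assumes \<nu>: "sets \<nu> = sets borel" and T: "T \<in> \<mu> \<rightarrow>\<^sub>M borel"
  shows "{z \<in> space (\<mu> \<Otimes>\<^sub>M \<nu>). dist (snd z) (T (fst z)) < r} \<in> sets (\<mu> \<Otimes>\<^sub>M \<nu>)"
proof -
  have "snd \<in> \<mu> \<Otimes>\<^sub>M \<nu> \<rightarrow>\<^sub>M borel"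
    by (subst measurable_cong_sets[OF refl \<nu>, symmetric]) (rule measurable_snd)
  with T show ?thesis
    by measurable
qed

lemma emeasure_pair_near_graph_le:
  fixes T :: "'a \<Rightarrow> 'b::{metric_space, second_countable_topology}"
  assumes "prob_space \<mu>" "prob_space \<nu>" and \<nu>: "sets \<nu> = sets borel" and T: "T \<in> \<mu> \<rightarrow>\<^sub>M borel"
    and balls: "\<And>y. emeasure \<nu> (ball y r) \<le> c"
  shows "emeasure (\<mu> \<Otimes>\<^sub>M \<nu>) {z \<in> space (\<mu> \<Otimes>\<^sub>M \<nu>). dist (snd z) (T (fst z)) < r} \<le> c"
    (is "emeasure _ ?A \<le> _")
proof -
  interpret \<mu>: prob_space \<mu> by fact
  interpret \<nu>: prob_space \<nu> by fact
  have "emeasure (\<mu> \<Otimes>\<^sub>M \<nu>) ?A = (\<integral>\<^sup>+ x. emeasure \<nu> (Pair x -` ?A) \<partial>\<mu>)"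
    using \<nu> T by (intro \<nu>.emeasure_pair_measure_alt sets_near_graph)
  also have "\<dots> \<le> (\<integral>\<^sup>+ x. c \<partial>\<mu>)"
  proof (rule nn_integral_mono)
    fix x assume "x \<in> space \<mu>"
    then have "Pair x -` ?A = ball (T x) r"
      using sets_eq_imp_space_eq[OF \<nu>] by (auto simp: space_pair_measure dist_commute)
    then show "emeasure \<nu> (Pair x -` ?A) \<le> c"
      using balls by simp
  qed
  also have "\<dots> = c"
    by (simp add: \<mu>.emeasure_space_1)
  finally show ?thesis .
qed

lemma nn_integral_sq_ge_of_small_sublevel:
  fixes g :: "'a \<Rightarrow> real"
  assumes "prob_space M" and A: "{z \<in> space M. g z < r} \<in> sets M"
    and small: "measure M {z \<in> space M. g z < r} \<le> 1 / 2" and "0 \<le> r"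
  shows "ennreal (r\<^sup>2 / 2) \<le> (\<integral>\<^sup>+ z. ennreal ((g z)\<^sup>2) \<partial>M)"
proof -
  interpret prob_space M by fact
  let ?B = "{z \<in> space M. r \<le> g z}"
  have B: "?B = space M - {z \<in> space M. g z < r}"
    by auto
  have "1 / 2 \<le> measure M ?B"
    using prob_compl[OF A] small by (simp add: B)
  then have "r\<^sup>2 / 2 \<le> r\<^sup>2 * measure M ?B"
    using mult_left_mono[of "1 / 2" _ "r\<^sup>2"] by simp
  then have "ennreal (r\<^sup>2 / 2) \<le> ennreal (r\<^sup>2) * emeasure M ?B"
    by (simp add: emeasure_eq_measure ennreal_mult[symmetric] ennreal_leI)
  also have "\<dots> = (\<integral>\<^sup>+ z. ennreal (r\<^sup>2) * indicator ?B z \<partial>M)"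
    using A by (simp add: B nn_integral_cmult_indicator)
  also have "\<dots> \<le> (\<integral>\<^sup>+ z. ennreal ((g z)\<^sup>2) \<partial>M)"
    using \<open>0 \<le> r\<close> by (intro nn_integral_mono) (auto split: split_indicator intro!: ennreal_leI power_mono)
  finally show ?thesis .
qed

lemma sqrt_powr_scaling:
  fixes K \<epsilon> :: real and d :: nat
  assumes K: "0 < K" and \<epsilon>: "0 < \<epsilon>" and d: "0 < d"
  shows "sqrt (K powr (2 / real d) * \<epsilon> powr (2 / (2 + real d))) ^ d * \<epsilon> powr (2 / (2 + real d)) = K * \<epsilon>"
proof -
  have "sqrt (K powr (2 / real d) * \<epsilon> powr (2 / (2 + real d))) ^ d
      = (K powr (2 / real d) * \<epsilon> powr (2 / (2 + real d))) powr (real d / 2)"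
    using K \<epsilon> by (simp add: powr_half_sqrt[symmetric] powr_realpow[symmetric] powr_powr)
  also have "\<dots> = K * \<epsilon> powr (real d / (2 + real d))"
    using K \<epsilon> d by (simp add: powr_mult powr_powr) (auto intro!: arg_cong[where f = "(powr) \<epsilon>"] simp: field_simps)
  finally show ?thesis
    using \<epsilon> by (simp add: powr_add[symmetric] add_divide_distrib[symmetric] add.commute)
qed

lemma nn_integral_sq_dist_graph_ge:
  fixes T :: "'a \<Rightarrow> 'b::{metric_space, second_countable_topology}"
  assumes \<mu>: "prob_space \<mu>" and \<nu>: "prob_space \<nu>" "sets \<nu> = sets borel" and T: "T \<in> \<mu> \<rightarrow>\<^sub>M borel"
    and \<pi>: "coupling \<mu> \<nu> \<pi>" "absolutely_continuous (\<mu> \<Otimes>\<^sub>M \<nu>) \<pi>"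
    and L2: "(\<integral>\<^sup>+ z. (RN_deriv (\<mu> \<Otimes>\<^sub>M \<nu>) \<pi> z)\<^sup>2 \<partial>(\<mu> \<Otimes>\<^sub>M \<nu>)) \<le> ennreal a"
    and balls: "\<And>y. emeasure \<nu> (ball y r) \<le> ennreal b"
    and ab: "0 < a" "0 < b" "a * b \<le> 1 / 4" and "0 \<le> r"
  shows "ennreal (r\<^sup>2 / 2) \<le> (\<integral>\<^sup>+ z. ennreal ((dist (snd z) (T (fst z)))\<^sup>2) \<partial>\<pi>)"
proof -
  let ?P = "\<mu> \<Otimes>\<^sub>M \<nu>"
  let ?A = "{z \<in> space ?P. dist (snd z) (T (fst z)) < r}"
  have sets_\<pi>: "sets \<pi> = sets ?P"
    using \<pi>(1) unfolding coupling_def by simp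
  interpret P: prob_space ?P
    using \<mu> \<nu>(1) by (rule prob_space_pair)
  interpret \<pi>: prob_space \<pi>
    using \<mu> \<pi>(1) by (rule prob_space_coupling)
  have A: "?A \<in> sets ?P"
    using \<nu>(2) T by (rule sets_near_graph)
  have "emeasure \<pi> ?A = emeasure (density ?P (RN_deriv ?P \<pi>)) ?A"
    using P.density_RN_deriv[OF \<pi>(2) sets_\<pi>] by simp
  also have "\<dots> \<le> ennreal (sqrt (a * b))"
    using A L2 emeasure_pair_near_graph_le[OF \<mu> \<nu> T balls] ab(1,2)
    by (intro emeasure_density_le_sqrt) auto
  also have "\<dots> \<le> ennreal (1 / 2)"
    using ab by (intro ennreal_leI, subst real_sqrt_le_iff') (auto simp: power2_eq_square)
  finally have "measure \<pi> ?A \<le> 1 / 2"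
    by (subst (asm) \<pi>.emeasure_eq_measure, subst (asm) ennreal_le_iff) auto
  moreover have "space \<pi> = space ?P"
    using sets_\<pi> by (rule sets_eq_imp_space_eq)
  ultimately show ?thesis
    using \<pi>.prob_space_axioms A sets_\<pi> \<open>0 \<le> r\<close> by (intro nn_integral_sq_ge_of_small_sublevel) auto
qed

lemma emeasure_le_density_bound:
  fixes g :: "'a::euclidean_space \<Rightarrow> real"
  assumes g: "g \<in> borel_measurable borel" and \<nu>: "\<nu> = density lborel (\<lambda>y. ennreal (g y))"
    and bound: "AE y in lborel. y \<in> spt \<nu> \<longrightarrow> g y \<le> c" and S: "S \<in> sets borel"
  shows "emeasure \<nu> S \<le> ennreal c * emeasure lborel S"
  unfolding \<nu> using g bound S
  by (intro emeasure_density_le_bound_on_spt) (auto simp: \<nu>[symmetric] elim!: eventually_mono intro: ennreal_leI)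

lemma density_bound_pos:
  fixes g :: "'a::euclidean_space \<Rightarrow> real"
  assumes "prob_space \<nu>" and "\<nu> = density lborel (\<lambda>y. ennreal (g y))" "g \<in> borel_measurable borel"
    and "AE y in lborel. y \<in> spt \<nu> \<longrightarrow> g y \<le> c"
  shows "0 < c"
proof (rule ccontr)
  assume "\<not> 0 < c"
  then have "emeasure \<nu> UNIV \<le> 0"
    using emeasure_le_density_bound[OF assms(3,2,4), of UNIV] by (simp add: ennreal_neg)
  moreover have "emeasure \<nu> UNIV = 1"
    using prob_space.emeasure_space_1[OF assms(1)] assms(2) by simp
  ultimately show False
    by simp
qed

lemma emeasure_ball_le_density_bound:
  fixes g :: "'a::euclidean_space \<Rightarrow> real"
  assumes "g \<in> borel_measurable borel" "\<nu> = density lborel (\<lambda>y. ennreal (g y))"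
    and "AE y in lborel. y \<in> spt \<nu> \<longrightarrow> g y \<le> c" and "0 \<le> r"
  shows "emeasure \<nu> (ball y r) \<le> ennreal (c * omega DIM('a) * r ^ DIM('a))"
proof -
  have "omega DIM('a) = unit_ball_vol DIM('a)"
    by (simp add: omega_def unit_ball_vol_def)
  then show ?thesis
    using emeasure_le_density_bound[OF assms(1-3), of "ball y r"] \<open>0 \<le> r\<close>
    by (simp add: emeasure_ball ennreal_mult'' mult.assoc)
qed

lemma radius_product_eq:
  fixes h w C \<epsilon> :: real and d :: nat
  assumes "0 < h" "0 < w" "0 < C" "0 < \<epsilon>" "0 < d"
  defines "e \<equiv> \<epsilon> powr (2 / (2 + real d))"
  shows "2 / \<epsilon> * (C * e) * (h * w * sqrt ((1 / (96 * h * w * C)) powr (2 / real d) * e) ^ d) = 1 / 48"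
proof -
  have "sqrt ((1 / (96 * h * w * C)) powr (2 / real d) * e) ^ d * e = 1 / (96 * h * w * C) * \<epsilon>"
    using assms by (simp add: e_def sqrt_powr_scaling)
  then show ?thesis
    using assms by (simp add: field_simps)
qed

lemma QOT_optimizer_mse_ge:
  fixes \<mu> \<nu> :: "'a::euclidean_space measure" and T :: "'a \<Rightarrow> 'a" and \<epsilon> :: real
  defines "e \<equiv> \<epsilon> powr (2 / (2 + real DIM('a)))"
  assumes \<mu>: "prob_space \<mu>" and \<nu>: "prob_space \<nu>" "\<nu> = density lborel (\<lambda>y. ennreal (g y))"
    and g: "g \<in> borel_measurable borel" "AE y in lborel. y \<in> spt \<nu> \<longrightarrow> g y \<le> c"
    and T: "T \<in> \<mu> \<rightarrow>\<^sub>M borel" and opt: "QOT_optimizer \<epsilon> \<mu> \<nu> \<pi>" and "0 < \<epsilon>" "0 < C"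
    and gap: "1 / C * e \<le> QOT_gap \<epsilon> \<mu> \<nu>" "QOT_gap \<epsilon> \<mu> \<nu> \<le> C * e"
  shows "ennreal (1 / 2 * (1 / (96 * c * omega DIM('a) * C)) powr (2 / real DIM('a)) * e)
    \<le> (\<integral>\<^sup>+ z. ennreal ((norm (snd z - T (fst z)))\<^sup>2) \<partial>\<pi>)"
proof -
  define d where "d = DIM('a)"
  define r where "r = sqrt ((1 / (96 * c * omega d * C)) powr (2 / real d) * e)"
  have c: "0 < c"
    using \<nu> g by (rule density_bound_pos)
  have \<omega>: "0 < omega d"
    by (simp add: omega_def)
  have r: "0 < r"
    using c \<omega> \<open>0 < \<epsilon>\<close> \<open>0 < C\<close> by (simp add: r_def e_def)
  have "0 < 1 / C * e"
    using \<open>0 < \<epsilon>\<close> \<open>0 < C\<close> by (simp add: e_def)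
  then have gap_pos: "0 < QOT_gap \<epsilon> \<mu> \<nu>"
    using gap(1) by linarith
  have L2: "(\<integral>\<^sup>+ z. (RN_deriv (\<mu> \<Otimes>\<^sub>M \<nu>) \<pi> z)\<^sup>2 \<partial>(\<mu> \<Otimes>\<^sub>M \<nu>)) \<le> ennreal (2 / \<epsilon> * (C * e))"
    using nn_integral_RN_deriv_sq_le_QOT_gap[OF opt \<open>0 < \<epsilon>\<close> gap_pos] gap(2) \<open>0 < \<epsilon>\<close>
    by (elim order_trans) (intro ennreal_leI mult_left_mono, auto)
  have balls: "emeasure \<nu> (ball y r) \<le> ennreal (c * omega d * r ^ d)" for y
    unfolding d_def using g \<nu>(2) r by (intro emeasure_ball_le_density_bound) auto
  have "2 / \<epsilon> * (C * e) * (c * omega d * r ^ d) = 1 / 48"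
    unfolding r_def e_def d_def using c \<omega> \<open>0 < \<epsilon>\<close> \<open>0 < C\<close> by (intro radius_product_eq) (auto simp: d_def)
  then have "ennreal (r\<^sup>2 / 2) \<le> (\<integral>\<^sup>+ z. ennreal ((dist (snd z) (T (fst z)))\<^sup>2) \<partial>\<pi>)"
    using opt c \<omega> r \<open>0 < \<epsilon>\<close> \<open>0 < C\<close>
    by (intro nn_integral_sq_dist_graph_ge[OF \<mu> \<nu>(1) _ T _ _ L2 balls])
       (auto simp: \<nu>(2) QOT_optimizer_def QOT_admissible_def e_def)
  moreover have "r\<^sup>2 / 2 = 1 / 2 * (1 / (96 * c * omega d * C)) powr (2 / real d) * e"
    using c \<omega> \<open>0 < \<epsilon>\<close> \<open>0 < C\<close> by (simp add: r_def e_def)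
  ultimately show ?thesis
    by (simp add: dist_norm d_def)
qed

theorem lemmaA1:
  fixes \<mu> \<nu> :: "'a::euclidean_space measure"
    and \<Omega> :: "'a set" and \<rho>\<mu> g\<nu> :: "'a \<Rightarrow> real"
    and lo\<mu> hi\<mu> hi\<nu> Cval :: real
    and T :: "'a \<Rightarrow> 'a" and \<pi>e :: "real \<Rightarrow> ('a \<times> 'a) measure"
  assumes prob_\<mu>: "prob_space \<mu>" and prob_\<nu>: "prob_space \<nu>"
    and dom: "lipschitz_domain \<Omega>" "connected \<Omega>" "\<Omega> \<subseteq> ball 0 1"
    and \<rho>_meas: "\<rho>\<mu> \<in> borel_measurable borel"
    and \<mu>_dens: "\<mu> = density lborel (\<lambda>x. ennreal (\<rho>\<mu> x) * indicator \<Omega> x)"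
    and \<rho>_bounds: "0 < lo\<mu>" "AE x in lborel. x \<in> \<Omega> \<longrightarrow> lo\<mu> \<le> \<rho>\<mu> x \<and> \<rho>\<mu> x \<le> hi\<mu>"
    and g_meas: "g\<nu> \<in> borel_measurable borel" and g_nonneg: "\<And>y. 0 \<le> g\<nu> y"
    and \<nu>_dens: "\<nu> = density lborel (\<lambda>y. ennreal (g\<nu> y))"
    and \<nu>_spt: "spt \<nu> \<subseteq> ball 0 1"
    and g_bound: "AE y in lborel. y \<in> spt \<nu> \<longrightarrow> g\<nu> y \<le> hi\<nu>"
    and T: "monge_map \<mu> \<nu> T"
    and \<pi>e: "\<And>\<epsilon>. 0 < \<epsilon> \<Longrightarrow> \<epsilon> \<le> 1 \<Longrightarrow> QOT_optimizer \<epsilon> \<mu> \<nu> (\<pi>e \<epsilon>)"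
    and Cval_pos: "0 < Cval"
    and Cval: "\<And>\<epsilon>. 0 < \<epsilon> \<Longrightarrow> \<epsilon> \<le> 1 \<Longrightarrow>
        (1 / Cval) * \<epsilon> powr (2 / (2 + real DIM('a))) \<le> QOT_gap \<epsilon> \<mu> \<nu> \<and>
        QOT_gap \<epsilon> \<mu> \<nu> \<le> Cval * \<epsilon> powr (2 / (2 + real DIM('a)))"
  shows "\<forall>\<epsilon>. 0 < \<epsilon> \<and> \<epsilon> \<le> 1 \<longrightarrow>
     (\<integral>\<^sup>+ z. ennreal ((norm (snd z - T (fst z)))^2) \<partial>(\<pi>e \<epsilon>))
       \<ge> ennreal ((1/2) * (1 / (96 * hi\<nu> * omega DIM('a) * Cval)) powr (2 / real DIM('a))
                  * \<epsilon> powr (2 / (real DIM('a) + 2)))"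
proof -
  have "T \<in> \<mu> \<rightarrow>\<^sub>M borel"
    using T unfolding monge_map_def by simp
  then show ?thesis
    using QOT_optimizer_mse_ge[OF prob_\<mu> prob_\<nu> \<nu>_dens g_meas g_bound _ \<pi>e _ Cval_pos] Cval
    by (auto simp: add.commute)
qed

end
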